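(* Let $1\le p<\infty$ and let $\nu$ be a modulus of variation with $\nu(k)\uparrow\infty$ and $\nu(k)/k^{1/p}$ nonincreasing with limit $0$. Let $f$ be a continuous $2\pi$-periodic function. Then $f\in V_p[\nu]$ if and only if the sequence $\{F_n\}$ of Fejér means of $f$ is bounded in $V_p[\nu]$, i.e. $\sup_n\|F_n\|_{p,\nu}<\infty$.
   Context: A modulus of variation is a nondecreasing concave sequence of positive numbers. The Fejér kernel is $K_n(t)=\frac{2}{n+1}\Big(\frac{\sin\frac12(n+1)t}{2\sin\frac12t}\Big)^2$ and the Fejér mean is $F_n(x)=\frac1\pi\int_{-\pi}^{\pi}f(x+t)K_n(t)\,dt$. For a $2\pi$-periodic $g$, $\upsilon_p(n,g)=\sup(\sum_{j=1}^n|g(I_j)|^p)^{1/p}$ over $n$ nonoverlapping subintervals $I_j$ of a period interval $[a,b]=[a,a+2\pi]$, with $g(I)=g(\sup I)-g(\inf I)$; $\|g\|_{p,\nu}=\sup_n\upsilon_p(n,g)/\nu(n)+\sup_{x\in[a,b]}|g(x)|$, and $V_p[\nu]$ is the set of $g$ with $\|g\|_{p,\nu}<\infty$. *)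

theory Defs
  imports "HOL-Analysis.Analysis"
begin

definition modulus_of_variation :: "(nat \<Rightarrow> real) \<Rightarrow> bool" where
  "modulus_of_variation \<nu> \<longleftrightarrow>
     (\<forall>n\<ge>1. 0 < \<nu> n) \<and>
     (\<forall>n\<ge>1. \<nu> n \<le> \<nu> (Suc n)) \<and>
     (\<forall>n\<ge>1. \<nu> (Suc (Suc n)) - \<nu> (Suc n) \<le> \<nu> (Suc n) - \<nu> n)"

definition fejer_kernel :: "nat \<Rightarrow> real \<Rightarrow> real" where
  "fejer_kernel n t = 2 / (real n + 1) * (sin ((real n + 1) * t / 2) / (2 * sin (t / 2)))^2"

definition fejer_mean :: "(real \<Rightarrow> real) \<Rightarrow> nat \<Rightarrow> real \<Rightarrow> real" where
  "fejer_mean f n x = (1 / pi) * integral {-pi..pi} (\<lambda>t. f (x + t) * fejer_kernel n t)"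

definition nonoverlapping_family :: "real \<Rightarrow> nat \<Rightarrow> (nat \<Rightarrow> real) \<Rightarrow> (nat \<Rightarrow> real) \<Rightarrow> bool" where
  "nonoverlapping_family a n s t \<longleftrightarrow>
     (\<forall>j<n. a \<le> s j \<and> s j \<le> t j \<and> t j \<le> a + 2 * pi) \<and>
     (\<forall>i<n. \<forall>j<n. i \<noteq> j \<longrightarrow> t i \<le> s j \<or> t j \<le> s i)"

definition p_variation :: "real \<Rightarrow> real \<Rightarrow> nat \<Rightarrow> (real \<Rightarrow> real) \<Rightarrow> ereal" where
  "p_variation a p n g =
     (SUP st \<in> {(s, t). nonoverlapping_family a n s t}.
        ereal ((\<Sum>j<n. \<bar>g (snd st j) - g (fst st j)\<bar> powr p) powr (1 / p)))"

definition Vp_norm :: "real \<Rightarrow> real \<Rightarrow> (nat \<Rightarrow> real) \<Rightarrow> (real \<Rightarrow> real) \<Rightarrow> ereal" where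
  "Vp_norm a p \<nu> g =
     (SUP n \<in> {1..}. p_variation a p n g / ereal (\<nu> n)) +
     (SUP x \<in> {a..a + 2 * pi}. ereal \<bar>g x\<bar>)"

definition Vp :: "real \<Rightarrow> real \<Rightarrow> (nat \<Rightarrow> real) \<Rightarrow> (real \<Rightarrow> real) set" where
  "Vp a p \<nu> = {g. Vp_norm a p \<nu> g < \<infinity>}"

end

theory Submission
  imports Defs
begin

text \<open>
  The Fejer mean F_n f (x) is the average of the translates f (x + u) with respect to the
  probability density K_n (u) / \<pi> on [-\<pi>, \<pi>]. By Jensen's inequality, the p-sum of the
  increments of F_n f over k nonoverlapping intervals is at most the average over u of the
  p-sums of f over the translated intervals. Cutting a translated family at the point congruent
  to a and moving the two parts back by a period gives 2k intervals in [a, a + 2\<pi>], at the price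
  of a factor 2 ^ (p - 1); as \<nu> (2k) \<le> 2 ^ (1/p) \<nu> (k), the increments of F_n f are bounded by
  twice those of f. Conversely, F_n f \<longrightarrow> f pointwise since K_n is an approximate identity, and
  the bounds pass to the limit.
\<close>

section \<open>The Fejer kernel as a trigonometric polynomial\<close>

definition dirichlet_kernel :: "nat \<Rightarrow> real \<Rightarrow> real" where
  "dirichlet_kernel k t = 1/2 + (\<Sum>j=1..k. cos (real j * t))"

text \<open>It agrees with fejer_kernel
  except at the zeros of sin (t/2), where fejer_kernel takes the junk value 0 (division by
  zero); being continuous, it is the version we integrate against.\<close>
definition fejer_poly :: "nat \<Rightarrow> real \<Rightarrow> real" where
  "fejer_poly n t = (\<Sum>k\<le>n. dirichlet_kernel k t) / (real n + 1)"

lemma sin_half_mult_dirichlet_kernel: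
  "2 * sin (t/2) * dirichlet_kernel k t = sin ((real k + 1/2) * t)"
proof (induction k)
  case 0
  then show ?case by (simp add: dirichlet_kernel_def)
next
  case (Suc k)
  have "(real k + 3/2) * t = (real k + 1) * t + t/2" "(real k + 1/2) * t = (real k + 1) * t - t/2"
    by (simp_all add: algebra_simps)
  then have "sin ((real k + 3/2) * t) = sin ((real k + 1/2) * t) + 2 * sin (t/2) * cos ((real k + 1) * t)"
    by (simp add: sin_add sin_diff)
  with Suc show ?case
    by (simp add: dirichlet_kernel_def algebra_simps)
qed

lemma sum_sin_half_mult_sin:
  "(\<Sum>k\<le>n. 2 * sin (t/2) * sin ((real k + 1/2) * t)) = 1 - cos ((real n + 1) * t)"
proof (induction n)
  case 0
  show ?case using cos_double_sin[of "t/2"] by (simp add: power2_eq_square)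
next
  case (Suc n)
  have "(real n + 2) * t = (real n + 3/2) * t + t/2" "(real n + 1) * t = (real n + 3/2) * t - t/2"
    by (simp_all add: algebra_simps)
  then have "2 * sin (t/2) * sin ((real n + 3/2) * t) = cos ((real n + 1) * t) - cos ((real n + 2) * t)"
    by (simp add: cos_add cos_diff)
  with Suc show ?case by (simp add: algebra_simps)
qed

lemma fejer_kernel_eq_fejer_poly:
  assumes "sin (t/2) \<noteq> 0"
  shows "fejer_kernel n t = fejer_poly n t"
proof -
  let ?s = "sin (t/2)"
  have "(2 * ?s)\<^sup>2 * (\<Sum>k\<le>n. dirichlet_kernel k t) = (\<Sum>k\<le>n. 2 * ?s * (2 * ?s * dirichlet_kernel k t))"
    by (simp add: sum_distrib_left power2_eq_square mult.assoc)
  also have "\<dots> = (\<Sum>k\<le>n. 2 * ?s * sin ((real k + 1/2) * t))"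
    by (simp only: sin_half_mult_dirichlet_kernel)
  also have "\<dots> = 2 * (sin ((real n + 1) * t / 2))\<^sup>2"
    using sum_sin_half_mult_sin cos_double_sin[of "(real n + 1) * t / 2"] by simp
  finally have "(\<Sum>k\<le>n. dirichlet_kernel k t) = 2 * (sin ((real n + 1) * t / 2) / (2 * ?s))\<^sup>2"
    using assms by (simp add: power_divide field_simps)
  then show ?thesis by (simp add: fejer_kernel_def fejer_poly_def)
qed

lemma continuous_on_fejer_poly: "continuous_on S (fejer_poly n)"
  unfolding fejer_poly_def dirichlet_kernel_def by (intro continuous_intros) simp

lemma has_integral_cos_mult:
  assumes "j \<ge> 1"
  shows "((\<lambda>t. cos (real j * t)) has_integral 0) {-pi..pi}"
proof -
  have "((\<lambda>t. cos (real j * t)) has_integral sin (real j * pi) / real j - sin (real j * - pi) / real j) {-pi..pi}"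
    using assms
    by (intro fundamental_theorem_of_calculus)
       (auto intro!: derivative_eq_intros simp flip: has_real_derivative_iff_has_vector_derivative)
  then show ?thesis by (simp add: sin_zero_iff_int2)
qed

lemma has_integral_dirichlet_kernel: "(dirichlet_kernel k has_integral pi) {-pi..pi}"
proof -
  have "((\<lambda>_. 1/2) has_integral pi) {-pi..pi}"
    using has_integral_const_real[of "1/2::real" "-pi" pi] by simp
  then have "(dirichlet_kernel k has_integral pi + (\<Sum>j=1..k. 0)) {-pi..pi}"
    unfolding dirichlet_kernel_def[abs_def]
    by (intro has_integral_add has_integral_sum has_integral_cos_mult) auto
  then show ?thesis by simp
qed

lemma has_integral_fejer_poly: "(fejer_poly n has_integral pi) {-pi..pi}"
proof -
  have "((\<lambda>t. (\<Sum>k\<le>n. dirichlet_kernel k t) / (real n + 1)) has_integral (\<Sum>k\<le>n. pi) / (real n + 1)) {-pi..pi}"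
    by (intro has_integral_divide has_integral_sum has_integral_dirichlet_kernel) auto
  then show ?thesis by (simp add: fejer_poly_def[abs_def] add.commute)
qed

lemma sin_half_neq_zero:
  assumes "t \<in> {-pi..pi}" "t \<noteq> 0"
  shows "sin (t/2) \<noteq> 0"
  using assms sin_eq_0_pi[of "t/2"] by auto

lemma fejer_poly_nonneg:
  assumes "t \<in> {-pi..pi}"
  shows "0 \<le> fejer_poly n t"
proof (cases "t = 0")
  case True
  then show ?thesis by (simp add: fejer_poly_def dirichlet_kernel_def sum_nonneg)
next
  case False
  have "0 \<le> fejer_kernel n t" by (simp add: fejer_kernel_def)
  with False show ?thesis
    using fejer_kernel_eq_fejer_poly[OF sin_half_neq_zero[OF assms]] by simp
qed

lemma fejer_poly_le:
  assumes "0 < d" "d \<le> \<bar>t\<bar>" "\<bar>t\<bar> \<le> pi"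
  shows "fejer_poly n t \<le> 1 / (2 * (real n + 1) * (sin (d/2))\<^sup>2)"
proof -
  have sd: "0 < sin (d/2)" using assms by (intro sin_gt_zero) auto
  have "sin (d/2) \<le> sin (\<bar>t\<bar>/2)" using assms by (intro sin_monotone_2pi_le) auto
  then have "(sin (d/2))\<^sup>2 \<le> (sin (\<bar>t\<bar>/2))\<^sup>2" using sd by (intro power_mono) auto
  also have "(sin (\<bar>t\<bar>/2))\<^sup>2 = (sin (t/2))\<^sup>2" by (cases "t \<ge> 0") auto
  finally have le: "(sin (d/2))\<^sup>2 \<le> (sin (t/2))\<^sup>2" .
  have "t \<in> {-pi..pi}" "t \<noteq> 0" using assms by auto
  then have "fejer_poly n t = fejer_kernel n t"
    using fejer_kernel_eq_fejer_poly[OF sin_half_neq_zero] by simp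
  also have "\<dots> = 2 / (real n + 1) * ((sin ((real n + 1) * t / 2))\<^sup>2 / (4 * (sin (t/2))\<^sup>2))"
    by (simp add: fejer_kernel_def power_divide power_mult_distrib)
  also have "\<dots> \<le> 2 / (real n + 1) * (1 / (4 * (sin (d/2))\<^sup>2))"
    using le sd by (intro mult_left_mono frac_le) (auto simp: abs_square_le_1)
  also have "\<dots> = 1 / (2 * (real n + 1) * (sin (d/2))\<^sup>2)" by (simp add: divide_simps)
  finally show ?thesis .
qed

section \<open>Convexity inequalities for powers\<close>

lemma powr_above_tangent:
  fixes m y p :: real
  assumes p: "1 \<le> p" and m: "0 < m"
  shows "m powr p + p * m powr (p - 1) * (y - m) \<le> \<bar>y\<bar> powr p"
proof (cases "y > 0")
  case True
  have "((\<lambda>z. z powr p) has_real_derivative p * m powr (p - 1)) (at m within {0<..})"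
    using has_real_derivative_powr[OF m] by (rule has_field_derivative_at_within)
  then have "p * m powr (p - 1) * (y - m) \<le> y powr p - m powr p"
    using convex_on_imp_above_tangent[OF powr_convex[OF p]] m True
    by (simp add: convex_connected interior_open)
  then show ?thesis using True by simp
next
  case False
  have "0 \<le> (p - 1) * m" "p * y \<le> 0"
    using p m False by (auto simp: mult_nonneg_nonpos)
  then have "m + p * (y - m) \<le> 0"
    by (simp add: algebra_simps)
  moreover have "m powr p = m powr (p - 1) * m"
    using powr_mult_base[OF less_imp_le[OF m], of "p - 1"] by (simp add: mult.commute)
  ultimately have "m powr p + p * m powr (p - 1) * (y - m) \<le> 0"
    using mult_nonneg_nonpos[of "m powr (p - 1)" "m + p * (y - m)"] by (simp add: algebra_simps)
  then show ?thesis by (meson order.trans powr_ge_zero)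
qed

lemma abs_powr_above_tangent:
  fixes m y p :: real
  assumes p: "1 \<le> p" and m: "m \<noteq> 0"
  shows "\<bar>m\<bar> powr p + p * sgn m * \<bar>m\<bar> powr (p - 1) * (y - m) \<le> \<bar>y\<bar> powr p"
proof (cases "m > 0")
  case True
  then show ?thesis using powr_above_tangent[OF p True, of y] by simp
next
  case False
  then have "-m > 0" using m by simp
  from powr_above_tangent[OF p this, of "-y"] False m show ?thesis
    by (simp add: algebra_simps)
qed

lemma abs_add_powr_le:
  fixes x y p :: real
  assumes p: "1 \<le> p"
  shows "\<bar>x + y\<bar> powr p \<le> 2 powr (p - 1) * (\<bar>x\<bar> powr p + \<bar>y\<bar> powr p)"
proof (cases "x = 0 \<and> y = 0")
  case True
  then show ?thesis by simp
next
  case False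
  define m where "m = (\<bar>x\<bar> + \<bar>y\<bar>) / 2"
  have m: "0 < m" using False by (auto simp: m_def)
  \<comment> \<open>the tangent lines at the midpoint m cancel\<close>
  have "(\<bar>x\<bar> - m) + (\<bar>y\<bar> - m) = 0" by (simp add: m_def)
  then have "p * m powr (p - 1) * (\<bar>x\<bar> - m) + p * m powr (p - 1) * (\<bar>y\<bar> - m) = 0"
    by (metis distrib_left mult_zero_right)
  then have "2 * m powr p \<le> \<bar>x\<bar> powr p + \<bar>y\<bar> powr p"
    using powr_above_tangent[OF p m, of "\<bar>x\<bar>"] powr_above_tangent[OF p m, of "\<bar>y\<bar>"] by simp
  moreover have "\<bar>x + y\<bar> powr p \<le> (2 * m) powr p"
    using p abs_triangle_ineq[of x y] by (intro powr_mono2) (auto simp: m_def)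
  moreover have "(2 * m) powr p = 2 powr (p - 1) * (2 * m powr p)"
    using m powr_mult_base[of 2 "p - 1"] by (simp add: powr_mult)
  ultimately show ?thesis
    by (metis mult_left_mono order.trans powr_ge_zero)
qed

lemma continuous_on_abs_powr:
  fixes h :: "'a::topological_space \<Rightarrow> real"
  shows "0 < p \<Longrightarrow> continuous_on S h \<Longrightarrow> continuous_on S (\<lambda>x. \<bar>h x\<bar> powr p)"
  by (intro continuous_on_powr' continuous_intros) auto

section \<open>Averages against the Fejer kernel\<close>

definition fejer_average :: "nat \<Rightarrow> (real \<Rightarrow> real) \<Rightarrow> real" where
  "fejer_average n h = (1/pi) * integral {-pi..pi} (\<lambda>t. h t * fejer_poly n t)"

lemma fejer_mean_eq_fejer_average: "fejer_mean f n x = fejer_average n (\<lambda>t. f (x + t))"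
proof -
  have "integral {-pi..pi} (\<lambda>t. f (x + t) * fejer_kernel n t) = integral {-pi..pi} (\<lambda>t. f (x + t) * fejer_poly n t)"
    by (rule integral_spike[of "{0}"]) (auto simp: fejer_kernel_eq_fejer_poly sin_half_neq_zero)
  then show ?thesis by (simp add: fejer_mean_def fejer_average_def)
qed

lemma has_integral_mult_fejer_poly:
  assumes "continuous_on {-pi..pi} h"
  shows "((\<lambda>t. h t * fejer_poly n t) has_integral pi * fejer_average n h) {-pi..pi}"
proof -
  have "(\<lambda>t. h t * fejer_poly n t) integrable_on {-pi..pi}"
    by (intro integrable_continuous_interval continuous_intros assms continuous_on_fejer_poly)
  then show ?thesis by (simp add: fejer_average_def has_integral_integrable_integral)
qed

lemma fejer_average_affine:
  assumes "continuous_on {-pi..pi} h"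
  shows "fejer_average n (\<lambda>t. A + c * h t) = A + c * fejer_average n h"
proof -
  have "((\<lambda>t. A * fejer_poly n t + c * (h t * fejer_poly n t)) has_integral
          A * pi + c * (pi * fejer_average n h)) {-pi..pi}"
    by (intro has_integral_add has_integral_mult_right has_integral_fejer_poly
        has_integral_mult_fejer_poly assms)
  then have "((\<lambda>t. (A + c * h t) * fejer_poly n t) has_integral pi * (A + c * fejer_average n h)) {-pi..pi}"
    by (simp add: algebra_simps)
  then show ?thesis by (simp add: fejer_average_def integral_unique)
qed

lemma fejer_average_const: "fejer_average n (\<lambda>_. c) = c"
  using fejer_average_affine[of "\<lambda>_. 0" n c 0] by simp

lemma fejer_average_diff:
  assumes "continuous_on {-pi..pi} g" "continuous_on {-pi..pi} h"
  shows "fejer_average n (\<lambda>t. g t - h t) = fejer_average n g - fejer_average n h"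
proof -
  have "((\<lambda>t. g t * fejer_poly n t - h t * fejer_poly n t) has_integral
          pi * fejer_average n g - pi * fejer_average n h) {-pi..pi}"
    by (intro has_integral_diff has_integral_mult_fejer_poly assms)
  then show ?thesis by (simp add: fejer_average_def integral_unique left_diff_distrib right_diff_distrib)
qed

lemma fejer_average_sum:
  assumes "finite J" "\<And>j. j \<in> J \<Longrightarrow> continuous_on {-pi..pi} (h j)"
  shows "fejer_average n (\<lambda>t. \<Sum>j\<in>J. h j t) = (\<Sum>j\<in>J. fejer_average n (h j))"
proof -
  have "((\<lambda>t. \<Sum>j\<in>J. h j t * fejer_poly n t) has_integral (\<Sum>j\<in>J. pi * fejer_average n (h j))) {-pi..pi}"
    by (intro has_integral_sum has_integral_mult_fejer_poly assms)
  then show ?thesis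
    by (simp add: fejer_average_def integral_unique sum_distrib_left sum_distrib_right)
qed

lemma fejer_average_mono:
  assumes "continuous_on {-pi..pi} g" "continuous_on {-pi..pi} h"
    and "\<And>t. t \<in> {-pi..pi} \<Longrightarrow> g t \<le> h t"
  shows "fejer_average n g \<le> fejer_average n h"
proof -
  have "pi * fejer_average n g \<le> pi * fejer_average n h"
    by (rule has_integral_le[OF has_integral_mult_fejer_poly has_integral_mult_fejer_poly])
       (use assms fejer_poly_nonneg in \<open>auto intro: mult_right_mono\<close>)
  then show ?thesis by simp
qed

lemma abs_fejer_average_powr_le:
  assumes p: "1 \<le> p" and h: "continuous_on {-pi..pi} h"
  shows "\<bar>fejer_average n h\<bar> powr p \<le> fejer_average n (\<lambda>t. \<bar>h t\<bar> powr p)"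
proof -
  define m where "m = fejer_average n h"
  have hp: "continuous_on {-pi..pi} (\<lambda>t. \<bar>h t\<bar> powr p)"
    using p by (intro continuous_on_abs_powr h) auto
  show ?thesis
  proof (cases "m = 0")
    case True
    have "fejer_average n (\<lambda>_. 0) \<le> fejer_average n (\<lambda>t. \<bar>h t\<bar> powr p)"
      by (intro fejer_average_mono hp) auto
    with True show ?thesis by (simp add: m_def fejer_average_const)
  next
    case False
    \<comment> \<open>average the supporting line of the convex function at m\<close>
    define c where "c = p * sgn m * \<bar>m\<bar> powr (p - 1)"
    have "fejer_average n (\<lambda>t. (\<bar>m\<bar> powr p - c * m) + c * h t) \<le> fejer_average n (\<lambda>t. \<bar>h t\<bar> powr p)"
    proof (rule fejer_average_mono)
      show "(\<bar>m\<bar> powr p - c * m) + c * h t \<le> \<bar>h t\<bar> powr p" for t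
        using abs_powr_above_tangent[OF p False, of "h t"] by (simp add: c_def algebra_simps)
    qed (use h hp in \<open>auto intro!: continuous_intros\<close>)
    then show ?thesis by (simp add: fejer_average_affine[OF h] m_def)
  qed
qed

lemma abs_fejer_average_le:
  assumes "continuous_on {-pi..pi} h"
  shows "\<bar>fejer_average n h\<bar> \<le> fejer_average n (\<lambda>t. \<bar>h t\<bar>)"
proof -
  have "\<bar>fejer_average n h\<bar> powr 1 \<le> fejer_average n (\<lambda>t. \<bar>h t\<bar> powr 1)"
    using assms by (rule abs_fejer_average_powr_le[OF order.refl])
  then show ?thesis by (simp only: powr_one' abs_abs)
qed

lemma fejer_average_abs_concentration:
  assumes g: "continuous_on {-pi..pi} g" and d: "0 < d"
    and M: "\<And>t. t \<in> {-pi..pi} \<Longrightarrow> \<bar>g t\<bar> \<le> M"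
    and e: "\<And>t. t \<in> {-pi..pi} \<Longrightarrow> \<bar>t\<bar> < d \<Longrightarrow> \<bar>g t\<bar> \<le> e"
  shows "fejer_average n (\<lambda>t. \<bar>g t\<bar>) \<le> e + M / ((real n + 1) * (sin (d/2))\<^sup>2)"
proof -
  define B where "B = M / ((real n + 1) * (sin (d/2))\<^sup>2)"
  have "0 \<le> e" "0 \<le> M" using e[of 0] M[of 0] d by auto
  then have "0 \<le> B" by (simp add: B_def)
  have pointwise: "\<bar>g t\<bar> * fejer_poly n t \<le> e * fejer_poly n t + B/2" if t: "t \<in> {-pi..pi}" for t
  proof (cases "\<bar>t\<bar> < d")
    case True
    then show ?thesis
      using mult_right_mono[OF e[OF t True] fejer_poly_nonneg[OF t, where n=n]] \<open>0 \<le> B\<close> by linarith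
  next
    case False
    then have "\<bar>g t\<bar> * fejer_poly n t \<le> M * (1 / (2 * (real n + 1) * (sin (d/2))\<^sup>2))"
      using M[OF t] fejer_poly_le[of d t n] fejer_poly_nonneg[OF t] t d \<open>0 \<le> M\<close>
      by (intro mult_mono) auto
    also have "\<dots> = B/2" by (simp add: B_def)
    finally show ?thesis
      using mult_nonneg_nonneg[OF \<open>0 \<le> e\<close> fejer_poly_nonneg[OF t, where n=n]] by linarith
  qed
  have "((\<lambda>t. e * fejer_poly n t + B/2) has_integral e * pi + 2 * pi * (B/2)) {-pi..pi}"
    using has_integral_add[OF has_integral_mult_right[OF has_integral_fejer_poly] has_integral_const_real[of "B/2" "-pi" pi]]
    by simp
  moreover have "continuous_on {-pi..pi} (\<lambda>t. \<bar>g t\<bar>)" by (intro continuous_intros g)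
  ultimately have "pi * fejer_average n (\<lambda>t. \<bar>g t\<bar>) \<le> pi * (e + B)"
    using pointwise by (intro has_integral_le[OF has_integral_mult_fejer_poly]) (auto simp: algebra_simps)
  then show ?thesis by (simp add: B_def)
qed

lemma fejer_average_tendsto:
  assumes h: "continuous_on {-pi..pi} h"
  shows "(\<lambda>n. fejer_average n h) \<longlonglongrightarrow> h 0"
proof (rule tendstoI)
  fix r :: real assume r: "0 < r"
  define g where "g t = h t - h 0" for t
  have g: "continuous_on {-pi..pi} g" unfolding g_def by (intro continuous_intros h)
  obtain M where M: "\<forall>t\<in>{-pi..pi}. \<bar>g t\<bar> \<le> M"
    using compact_imp_bounded[OF compact_continuous_image[OF g compact_Icc]]
    by (auto simp: bounded_iff)
  have "0 \<in> {-pi..pi}" by simp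
  then obtain d where "0 < d" and cont: "\<forall>t\<in>{-pi..pi}. dist t 0 < d \<longrightarrow> dist (h t) (h 0) < r/2"
    using h r unfolding continuous_on_iff by (meson half_gt_zero)
  then have near0: "\<bar>g t\<bar> \<le> r/2" if "t \<in> {-pi..pi}" "\<bar>t\<bar> < d" for t
    using that by (auto simp: g_def dist_real_def)
  have "(\<lambda>n. M / ((real n + 1) * (sin (d/2))\<^sup>2)) = (\<lambda>n. M / (sin (d/2))\<^sup>2 * inverse (real (Suc n)))"
    by (rule ext) (simp add: field_split_simps)
  then have "(\<lambda>n. M / ((real n + 1) * (sin (d/2))\<^sup>2)) \<longlonglongrightarrow> 0"
    by (simp only: tendsto_mult_right_zero[OF LIMSEQ_inverse_real_of_nat])
  then have "eventually (\<lambda>n. M / ((real n + 1) * (sin (d/2))\<^sup>2) < r/2) sequentially"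
    by (rule order_tendstoD(2)) (use r in simp)
  then show "eventually (\<lambda>n. dist (fejer_average n h) (h 0) < r) sequentially"
  proof (rule eventually_mono)
    fix n assume small: "M / ((real n + 1) * (sin (d/2))\<^sup>2) < r/2"
    have "fejer_average n h - h 0 = fejer_average n g"
      using fejer_average_affine[OF h, of n "- h 0" 1] by (simp add: g_def[abs_def])
    then have "\<bar>fejer_average n h - h 0\<bar> \<le> fejer_average n (\<lambda>t. \<bar>g t\<bar>)"
      using abs_fejer_average_le[OF g] by simp
    also have "\<dots> \<le> r/2 + M / ((real n + 1) * (sin (d/2))\<^sup>2)"
      using \<open>0 < d\<close> M near0 by (intro fejer_average_abs_concentration g) auto
    finally show "dist (fejer_average n h) (h 0) < r"
      unfolding dist_real_def using small by linarith
  qed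
qed

lemma continuous_on_translate:
  fixes f :: "real \<Rightarrow> real"
  assumes "continuous_on UNIV f"
  shows "continuous_on S (\<lambda>u. f (x + u))"
  by (rule continuous_on_compose2[OF assms]) (auto intro: continuous_on_add continuous_on_const continuous_on_id)

lemma fejer_mean_tendsto:
  assumes "continuous_on UNIV f"
  shows "(\<lambda>n. fejer_mean f n x) \<longlonglongrightarrow> f x"
  using fejer_average_tendsto[OF continuous_on_translate[OF assms]]
  by (simp add: fejer_mean_eq_fejer_average)

lemma abs_fejer_mean_le:
  assumes f: "continuous_on UNIV f" and R: "\<And>y. \<bar>f y\<bar> \<le> R"
  shows "\<bar>fejer_mean f n x\<bar> \<le> R"
proof -
  have fx: "continuous_on {-pi..pi} (\<lambda>t. f (x + t))"
    by (rule continuous_on_translate[OF f])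
  have "\<bar>fejer_average n (\<lambda>t. f (x + t))\<bar> \<le> fejer_average n (\<lambda>t. \<bar>f (x + t)\<bar>)"
    by (rule abs_fejer_average_le[OF fx])
  also have "\<dots> \<le> fejer_average n (\<lambda>_. R)"
    using R by (intro fejer_average_mono continuous_intros fx) auto
  finally show ?thesis by (simp add: fejer_mean_eq_fejer_average fejer_average_const)
qed

section \<open>Variation of periodic functions\<close>

lemma periodic_nat:
  assumes "\<forall>x. f (x + 2 * pi) = f x"
  shows "f (x + 2 * pi * real n) = f x"
proof (induction n)
  case (Suc n)
  have "f (x + 2 * pi * real (Suc n)) = f ((x + 2 * pi * real n) + 2 * pi)"
    by (simp add: algebra_simps)
  with Suc assms show ?case by simp
qed simp

lemma periodic_value_in_period:
  assumes per: "\<forall>x. f (x + 2 * pi) = f x"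
  obtains y where "y \<in> {a..a + 2 * pi}" "f x = f y"
proof -
  define m where "m = \<lfloor>(x - a) / (2 * pi)\<rfloor>"
  define y where "y = x - 2 * pi * real_of_int m"
  have "real_of_int m \<le> (x - a) / (2 * pi)" "(x - a) / (2 * pi) < real_of_int m + 1"
    unfolding m_def by linarith+
  then have "y \<in> {a..a + 2 * pi}"
    by (simp add: y_def field_simps)
  moreover have "f x = f y"
  proof (cases "m \<ge> 0")
    case True
    then show ?thesis
      using periodic_nat[OF per, of y "nat m"] by (simp add: y_def)
  next
    case False
    then show ?thesis
      using periodic_nat[OF per, of x "nat (- m)"] by (simp add: y_def)
  qed
  ultimately show ?thesis using that by blast
qed

definition variation_bounded :: "real \<Rightarrow> real \<Rightarrow> (nat \<Rightarrow> real) \<Rightarrow> (real \<Rightarrow> real) \<Rightarrow> real \<Rightarrow> bool" where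
  "variation_bounded a p \<nu> g M \<longleftrightarrow> (\<forall>k\<ge>1. \<forall>s t. nonoverlapping_family a k s t \<longrightarrow>
      (\<Sum>j<k. \<bar>g (t j) - g (s j)\<bar> powr p) powr (1/p) \<le> M * \<nu> k)"

lemma le_p_variation:
  assumes "nonoverlapping_family a k s t"
  shows "ereal ((\<Sum>j<k. \<bar>g (t j) - g (s j)\<bar> powr p) powr (1/p)) \<le> p_variation a p k g"
  unfolding p_variation_def by (rule SUP_upper2[of "(s, t)"]) (use assms in auto)

lemma p_variation_nonneg: "0 \<le> p_variation a p k g"
proof -
  have "nonoverlapping_family a k (\<lambda>_. a) (\<lambda>_. a)"
    by (simp add: nonoverlapping_family_def)
  from le_p_variation[OF this, where g=g and p=p] show ?thesis by (simp add: zero_ereal_def)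
qed

lemma Vp_norm_le:
  assumes pos: "\<forall>n\<ge>1. 0 < \<nu> n" and vb: "variation_bounded a p \<nu> g M"
    and bd: "\<forall>x\<in>{a..a + 2 * pi}. \<bar>g x\<bar> \<le> B"
  shows "Vp_norm a p \<nu> g \<le> ereal (M + B)"
proof -
  have "p_variation a p n g / ereal (\<nu> n) \<le> ereal M" if n: "n \<ge> 1" for n
  proof -
    have "p_variation a p n g \<le> ereal (M * \<nu> n)"
      unfolding p_variation_def using vb n by (intro SUP_least) (auto simp: variation_bounded_def)
    then show ?thesis
      using pos n by (subst ereal_divide_le_pos) (auto simp: mult.commute)
  qed
  then have "(SUP n \<in> {1..}. p_variation a p n g / ereal (\<nu> n)) \<le> ereal M"
    by (intro SUP_least) auto
  moreover have "(SUP x \<in> {a..a + 2 * pi}. ereal \<bar>g x\<bar>) \<le> ereal B"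
    using bd by (intro SUP_least) auto
  ultimately show ?thesis
    unfolding Vp_norm_def by (metis add_mono plus_ereal.simps(1))
qed

lemma Vp_norm_leD:
  assumes pos: "\<forall>n\<ge>1. 0 < \<nu> n" and le: "Vp_norm a p \<nu> g \<le> ereal R"
  shows "variation_bounded a p \<nu> g R" and "\<forall>x\<in>{a..a + 2 * pi}. \<bar>g x\<bar> \<le> R"
proof -
  define V where "V = (SUP n \<in> {1..}. p_variation a p n g / ereal (\<nu> n))"
  define S where "S = (SUP x \<in> {a..a + 2 * pi}. ereal \<bar>g x\<bar>)"
  have "0 \<le> V" unfolding V_def
    using pos p_variation_nonneg by (intro SUP_upper2[of 1]) auto
  moreover have "0 \<le> S" unfolding S_def
    by (rule SUP_upper2[of a]) auto
  moreover have "V + S \<le> ereal R" using le unfolding Vp_norm_def V_def S_def .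
  ultimately have V: "V \<le> ereal R" and S: "S \<le> ereal R"
    by (metis ereal_le_add_self ereal_le_add_self2 order.trans)+
  show "variation_bounded a p \<nu> g R"
    unfolding variation_bounded_def
  proof (intro allI impI)
    fix k :: nat and s t assume k: "k \<ge> 1" and fam: "nonoverlapping_family a k s t"
    have "p_variation a p k g / ereal (\<nu> k) \<le> ereal R"
      using k V unfolding V_def by (meson SUP_upper atLeast_iff order.trans)
    then have "p_variation a p k g \<le> ereal (R * \<nu> k)"
      using pos k by (subst (asm) ereal_divide_le_pos) (auto simp: mult.commute)
    then show "(\<Sum>j<k. \<bar>g (t j) - g (s j)\<bar> powr p) powr (1/p) \<le> R * \<nu> k"
      using le_p_variation[OF fam, where g=g and p=p] by (metis ereal_less_eq(3) order.trans)
  qed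
  show "\<forall>x\<in>{a..a + 2 * pi}. \<bar>g x\<bar> \<le> R"
    using S unfolding S_def by (metis SUP_le_iff ereal_less_eq(3))
qed

lemma variation_bounded_limit:
  assumes p: "0 < p" and lim: "\<And>x. (\<lambda>n. G n x) \<longlonglongrightarrow> g x"
    and vb: "\<And>n. variation_bounded a p \<nu> (G n) R"
  shows "variation_bounded a p \<nu> g R"
  unfolding variation_bounded_def
proof (intro allI impI)
  fix k :: nat and s t assume k: "k \<ge> 1" and fam: "nonoverlapping_family a k s t"
  have "(\<lambda>n. \<Sum>j<k. \<bar>G n (t j) - G n (s j)\<bar> powr p) \<longlonglongrightarrow> (\<Sum>j<k. \<bar>g (t j) - g (s j)\<bar> powr p)"
    using p by (intro tendsto_sum tendsto_powr' tendsto_rabs tendsto_diff lim tendsto_const) auto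
  then have "(\<lambda>n. (\<Sum>j<k. \<bar>G n (t j) - G n (s j)\<bar> powr p) powr (1/p))
      \<longlonglongrightarrow> (\<Sum>j<k. \<bar>g (t j) - g (s j)\<bar> powr p) powr (1/p)"
    using p by (intro tendsto_powr' tendsto_const) (auto intro!: always_eventually sum_nonneg)
  then show "(\<Sum>j<k. \<bar>g (t j) - g (s j)\<bar> powr p) powr (1/p) \<le> R * \<nu> k"
    by (rule LIMSEQ_le_const2) (use vb k fam in \<open>auto simp: variation_bounded_def\<close>)
qed

lemma nonoverlapping_family_translate:
  "nonoverlapping_family a k s t \<Longrightarrow>
     nonoverlapping_family (a + u) k (\<lambda>j. s j + u) (\<lambda>j. t j + u)"
  by (auto simp: nonoverlapping_family_def)

lemma nonoverlapping_family_cut: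
  fixes a b c :: real
  assumes fam: "nonoverlapping_family b k s t" and c: "b \<le> c" "c \<le> b + 2 * pi"
  defines "s' \<equiv> \<lambda>j. if j < k then min (s j) c + (a + 2 * pi - c) else max (s (j - k)) c + (a - c)"
    and "t' \<equiv> \<lambda>j. if j < k then min (t j) c + (a + 2 * pi - c) else max (t (j - k)) c + (a - c)"
  shows "nonoverlapping_family a (k + k) s' t'"
proof -
  have inside: "b \<le> s j" "s j \<le> t j" "t j \<le> b + 2 * pi" if "j < k" for j
    using fam that by (auto simp: nonoverlapping_family_def)
  have apart: "t i \<le> s j \<or> t j \<le> s i" if "i < k" "j < k" "i \<noteq> j" for i j
    using fam that by (auto simp: nonoverlapping_family_def)
  \<comment> \<open>the pieces below c end up to the right of the pieces above c\<close>
  have sep: "t' j \<le> s' i" if "i < k" "k \<le> j" "j < k + k" for i j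
  proof -
    have "j - k < k" using that by simp
    then show ?thesis
      using inside[of i] inside[of "j - k"] c that by (simp add: s'_def t'_def min_def max_def)
  qed
  have "\<forall>j<k + k. a \<le> s' j \<and> s' j \<le> t' j \<and> t' j \<le> a + 2 * pi"
  proof (intro allI impI)
    fix j assume j: "j < k + k"
    show "a \<le> s' j \<and> s' j \<le> t' j \<and> t' j \<le> a + 2 * pi"
    proof (cases "j < k")
      case True
      then show ?thesis using inside[of j] c by (simp add: s'_def t'_def min_def)
    next
      case False
      with j have "j - k < k" by simp
      with False show ?thesis using inside[of "j - k"] c by (simp add: s'_def t'_def max_def)
    qed
  qed
  moreover have "\<forall>i<k + k. \<forall>j<k + k. i \<noteq> j \<longrightarrow> t' i \<le> s' j \<or> t' j \<le> s' i"
  proof (intro allI impI)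
    fix i j assume i: "i < k + k" and j: "j < k + k" and "i \<noteq> j"
    show "t' i \<le> s' j \<or> t' j \<le> s' i"
    proof (cases "i < k"; cases "j < k")
      assume "i < k" "j < k"
      then show ?thesis using apart[of i j] \<open>i \<noteq> j\<close> by (auto simp: s'_def t'_def)
    next
      assume "\<not> i < k" "\<not> j < k"
      with i j \<open>i \<noteq> j\<close> have "i - k < k" "j - k < k" "i - k \<noteq> j - k" by auto
      then have "t (i - k) \<le> s (j - k) \<or> t (j - k) \<le> s (i - k)" by (rule apart)
      with \<open>\<not> i < k\<close> \<open>\<not> j < k\<close> show ?thesis by (auto simp: s'_def t'_def max_def)
    qed (use sep i j in auto)
  qed
  ultimately show ?thesis by (simp add: nonoverlapping_family_def)
qed

lemma sum_cut_family_le: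
  fixes f :: "real \<Rightarrow> real"
  assumes p: "1 \<le> p" and per: "\<forall>x. f (x + 2 * pi) = f x"
    and fam: "nonoverlapping_family b k s t" and b: "a - 2 * pi \<le> b" "b \<le> a + 2 * pi"
  obtains s' t' where "nonoverlapping_family a (k + k) s' t'"
    and "(\<Sum>j<k. \<bar>f (t j) - f (s j)\<bar> powr p) \<le> 2 powr (p - 1) * (\<Sum>j<k + k. \<bar>f (t' j) - f (s' j)\<bar> powr p)"
proof -
  \<comment> \<open>c is the point of [b, b + 2\<pi>] congruent to a modulo 2\<pi>\<close>
  define c where "c = (if a \<le> b then a + 2 * pi else a)"
  have c: "b \<le> c" "c \<le> b + 2 * pi" using b by (auto simp: c_def)
  have per_minus: "f (x - 2 * pi) = f x" for x
    using per[rule_format, of "x - 2 * pi"] by simp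
  have per1: "f (x + (a + 2 * pi - c)) = f x" and per2: "f (x + (a - c)) = f x" for x
    using per per_minus by (auto simp: c_def)
  define s' where "s' j = (if j < k then min (s j) c + (a + 2 * pi - c) else max (s (j - k)) c + (a - c))" for j
  define t' where "t' j = (if j < k then min (t j) c + (a + 2 * pi - c) else max (t (j - k)) c + (a - c))" for j
  have fam': "nonoverlapping_family a (k + k) s' t'"
    unfolding s'_def[abs_def] t'_def[abs_def] by (rule nonoverlapping_family_cut[OF fam c])
  define X where "X j = f (t' j) - f (s' j)" for j
  have split: "f (t j) - f (s j) = X j + X (k + j)" if "j < k" for j
  proof -
    have "f (min x c) + f (max x c) = f x + f c" for x
      by (cases "x \<le> c") (auto simp: min_def max_def)
    moreover have "X j = f (min (t j) c) - f (min (s j) c)" "X (k + j) = f (max (t j) c) - f (max (s j) c)"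
      using that by (simp_all add: X_def s'_def t'_def per1 per2)
    ultimately show ?thesis
      by (metis add_diff_cancel_right' add_diff_eq diff_add_eq diff_diff_eq2)
  qed
  have "(\<Sum>j<k. \<bar>f (t j) - f (s j)\<bar> powr p) \<le> (\<Sum>j<k. 2 powr (p - 1) * (\<bar>X j\<bar> powr p + \<bar>X (k + j)\<bar> powr p))"
    using split abs_add_powr_le[OF p] by (intro sum_mono) simp
  also have "\<dots> = 2 powr (p - 1) * ((\<Sum>j<k. \<bar>X j\<bar> powr p) + (\<Sum>j<k. \<bar>X (k + j)\<bar> powr p))"
    by (simp add: distrib_left sum.distrib sum_distrib_left)
  also have "(\<Sum>j<k. \<bar>X j\<bar> powr p) + (\<Sum>j<m. \<bar>X (k + j)\<bar> powr p) = (\<Sum>j<k + m. \<bar>X j\<bar> powr p)" for m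
    by (induction m) auto
  finally show ?thesis using that[OF fam'] by (simp add: X_def)
qed

lemma sum_translate_family_le:
  fixes f :: "real \<Rightarrow> real"
  assumes p: "1 \<le> p" and per: "\<forall>x. f (x + 2 * pi) = f x"
    and vb: "variation_bounded a p \<nu> f R" and k: "k \<ge> 1"
    and fam: "nonoverlapping_family a k s t" and u: "\<bar>u\<bar> \<le> 2 * pi"
  shows "(\<Sum>j<k. \<bar>f (t j + u) - f (s j + u)\<bar> powr p) \<le> 2 powr (p - 1) * (R * \<nu> (k + k)) powr p"
proof -
  have "a - 2 * pi \<le> a + u" "a + u \<le> a + 2 * pi" using u by auto
  then obtain s' t' where fam': "nonoverlapping_family a (k + k) s' t'"
    and le: "(\<Sum>j<k. \<bar>f (t j + u) - f (s j + u)\<bar> powr p)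
               \<le> 2 powr (p - 1) * (\<Sum>j<k + k. \<bar>f (t' j) - f (s' j)\<bar> powr p)"
    by (rule sum_cut_family_le[OF p per nonoverlapping_family_translate[OF fam]])
  define Q where "Q = (\<Sum>j<k + k. \<bar>f (t' j) - f (s' j)\<bar> powr p)"
  have "0 \<le> Q" by (simp add: Q_def sum_nonneg)
  have "Q powr (1/p) \<le> R * \<nu> (k + k)"
    using vb fam' k by (auto simp: variation_bounded_def Q_def)
  then have "(Q powr (1/p)) powr p \<le> (R * \<nu> (k + k)) powr p"
    using p by (intro powr_mono2) auto
  also have "(Q powr (1/p)) powr p = Q" using \<open>0 \<le> Q\<close> p by (simp add: powr_powr)
  finally have "2 powr (p - 1) * Q \<le> 2 powr (p - 1) * (R * \<nu> (k + k)) powr p"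
    by (rule mult_left_mono) simp
  moreover from le have "(\<Sum>j<k. \<bar>f (t j + u) - f (s j + u)\<bar> powr p) \<le> 2 powr (p - 1) * Q"
    unfolding Q_def .
  ultimately show ?thesis by linarith
qed

lemma ratio_root_antimono:
  assumes dec: "\<forall>k\<ge>1. \<nu> (Suc k) / real (Suc k) powr (1 / p) \<le> \<nu> k / real k powr (1 / p)"
    and "1 \<le> k" "k \<le> m"
  shows "\<nu> m / real m powr (1 / p) \<le> \<nu> k / real k powr (1 / p)"
  using assms(3)
proof (induction m rule: dec_induct)
  case (step m)
  then show ?case using dec assms(2) by (meson order.trans le_trans)
qed simp

lemma doubling_le:
  assumes dec: "\<forall>k\<ge>1. \<nu> (Suc k) / real (Suc k) powr (1 / p) \<le> \<nu> k / real k powr (1 / p)"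
    and k: "1 \<le> k"
  shows "\<nu> (k + k) \<le> 2 powr (1 / p) * \<nu> k"
proof -
  have "real (k + k) powr (1 / p) = 2 powr (1 / p) * real k powr (1 / p)"
    by (simp add: powr_mult[symmetric])
  moreover have "0 < real k powr (1 / p)" using k by simp
  ultimately show ?thesis
    using ratio_root_antimono[OF dec k, of "k + k"] by (simp add: field_simps)
qed

lemma sum_fejer_mean_increments_le:
  assumes p: "1 \<le> p" and f: "continuous_on UNIV f" and per: "\<forall>x. f (x + 2 * pi) = f x"
    and vb: "variation_bounded a p \<nu> f R" and k: "k \<ge> 1"
    and fam: "nonoverlapping_family a k s t"
  shows "(\<Sum>j<k. \<bar>fejer_mean f n (t j) - fejer_mean f n (s j)\<bar> powr p)
           \<le> 2 powr (p - 1) * (R * \<nu> (k + k)) powr p"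
proof -
  define h where "h j = (\<lambda>u. f (t j + u) - f (s j + u))" for j
  have h: "continuous_on {-pi..pi} (h j)" for j
    unfolding h_def by (intro continuous_on_diff continuous_on_translate[OF f])
  have hp: "continuous_on {-pi..pi} (\<lambda>u. \<bar>h j u\<bar> powr p)" for j
    using p by (intro continuous_on_abs_powr h) auto
  have "fejer_mean f n (t j) - fejer_mean f n (s j) = fejer_average n (h j)" for j
    unfolding fejer_mean_eq_fejer_average h_def
    by (rule fejer_average_diff[symmetric]) (rule continuous_on_translate[OF f])+
  then have "(\<Sum>j<k. \<bar>fejer_mean f n (t j) - fejer_mean f n (s j)\<bar> powr p)
      = (\<Sum>j<k. \<bar>fejer_average n (h j)\<bar> powr p)"
    by simp
  also have "\<dots> \<le> (\<Sum>j<k. fejer_average n (\<lambda>u. \<bar>h j u\<bar> powr p))"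
    by (intro sum_mono abs_fejer_average_powr_le p h)
  also have "\<dots> = fejer_average n (\<lambda>u. \<Sum>j<k. \<bar>h j u\<bar> powr p)"
    by (rule fejer_average_sum[symmetric]) (use hp in auto)
  also have "\<dots> \<le> fejer_average n (\<lambda>_. 2 powr (p - 1) * (R * \<nu> (k + k)) powr p)"
  proof (rule fejer_average_mono)
    fix u :: real assume "u \<in> {-pi..pi}"
    then have "\<bar>u\<bar> \<le> 2 * pi" by auto
    then show "(\<Sum>j<k. \<bar>h j u\<bar> powr p) \<le> 2 powr (p - 1) * (R * \<nu> (k + k)) powr p"
      unfolding h_def by (rule sum_translate_family_le[OF p per vb k fam])
  qed (use hp in \<open>auto intro: continuous_on_sum\<close>)
  finally show ?thesis by (simp add: fejer_average_const)
qed

lemma variation_bounded_fejer_mean: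
  assumes p: "1 \<le> p" and f: "continuous_on UNIV f" and per: "\<forall>x. f (x + 2 * pi) = f x"
    and pos: "\<forall>n\<ge>1. 0 < \<nu> n"
    and dec: "\<forall>k\<ge>1. \<nu> (Suc k) / real (Suc k) powr (1 / p) \<le> \<nu> k / real k powr (1 / p)"
    and vb: "variation_bounded a p \<nu> f R" and R: "0 \<le> R"
  shows "variation_bounded a p \<nu> (fejer_mean f n) (2 * R)"
  unfolding variation_bounded_def
proof (intro allI impI)
  fix k :: nat and s t assume k: "k \<ge> 1" and fam: "nonoverlapping_family a k s t"
  define W where "W = 2 powr (p - 1) * (R * \<nu> (k + k)) powr p"
  have "(\<Sum>j<k. \<bar>fejer_mean f n (t j) - fejer_mean f n (s j)\<bar> powr p) \<le> W"
    unfolding W_def by (rule sum_fejer_mean_increments_le[OF p f per vb k fam])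
  moreover have "0 \<le> (\<Sum>j<k. \<bar>fejer_mean f n (t j) - fejer_mean f n (s j)\<bar> powr p)"
    by (simp add: sum_nonneg)
  moreover have "0 \<le> 1/p" using p by simp
  ultimately have "(\<Sum>j<k. \<bar>fejer_mean f n (t j) - fejer_mean f n (s j)\<bar> powr p) powr (1/p) \<le> W powr (1/p)"
    by (intro powr_mono2)
  also have "W powr (1/p) = 2 powr ((p - 1) / p) * (R * \<nu> (k + k))"
  proof -
    have "0 < \<nu> (k + k)" using pos k by auto
    then show ?thesis using p R by (simp add: W_def powr_mult powr_powr)
  qed
  also have "\<dots> \<le> 2 powr ((p - 1) / p) * (R * (2 powr (1 / p) * \<nu> k))"
    using doubling_le[OF dec k] R by (intro mult_left_mono) auto
  also have "\<dots> = 2 * R * \<nu> k"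
  proof -
    have "2 powr ((p - 1) / p) * 2 powr (1 / p) = (2::real) powr 1"
      unfolding powr_add[symmetric] using p by (simp add: diff_divide_distrib)
    then show ?thesis by (simp add: algebra_simps)
  qed
  finally show "(\<Sum>j<k. \<bar>fejer_mean f n (t j) - fejer_mean f n (s j)\<bar> powr p) powr (1/p) \<le> 2 * R * \<nu> k" .
qed

lemma Vp_norm_fejer_mean_le:
  assumes p: "1 \<le> p" and f: "continuous_on UNIV f" and per: "\<forall>x. f (x + 2 * pi) = f x"
    and pos: "\<forall>n\<ge>1. 0 < \<nu> n"
    and dec: "\<forall>k\<ge>1. \<nu> (Suc k) / real (Suc k) powr (1 / p) \<le> \<nu> k / real k powr (1 / p)"
    and R: "Vp_norm a p \<nu> f \<le> ereal R"
  shows "Vp_norm a p \<nu> (fejer_mean f n) \<le> ereal (3 * R)"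
proof -
  have fR: "\<bar>f y\<bar> \<le> R" for y
  proof -
    obtain z where "z \<in> {a..a + 2 * pi}" "f y = f z"
      by (rule periodic_value_in_period[OF per])
    with Vp_norm_leD(2)[OF pos R] show ?thesis by simp
  qed
  then have "0 \<le> R" by (meson abs_ge_zero order.trans)
  with Vp_norm_leD(1)[OF pos R] have "variation_bounded a p \<nu> (fejer_mean f n) (2 * R)"
    by (intro variation_bounded_fejer_mean[OF p f per pos dec])
  moreover have "\<forall>x\<in>{a..a + 2 * pi}. \<bar>fejer_mean f n x\<bar> \<le> R"
    using abs_fejer_mean_le[OF f fR] by blast
  ultimately have "Vp_norm a p \<nu> (fejer_mean f n) \<le> ereal (2 * R + R)"
    by (rule Vp_norm_le[OF pos])
  then show ?thesis by simp
qed

lemma Vp_norm_le_of_pointwise_limit: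
  assumes p: "0 < p" and pos: "\<forall>n\<ge>1. 0 < \<nu> n"
    and lim: "\<And>x. (\<lambda>n. G n x) \<longlonglongrightarrow> g x" and R: "\<And>n. Vp_norm a p \<nu> (G n) \<le> ereal R"
  shows "Vp_norm a p \<nu> g \<le> ereal (2 * R)"
proof -
  have "variation_bounded a p \<nu> g R"
    using Vp_norm_leD(1)[OF pos R] by (rule variation_bounded_limit[OF p lim])
  moreover have "\<forall>x\<in>{a..a + 2 * pi}. \<bar>g x\<bar> \<le> R"
    using Vp_norm_leD(2)[OF pos R] by (intro ballI LIMSEQ_le_const2[OF tendsto_rabs[OF lim]]) auto
  ultimately have "Vp_norm a p \<nu> g \<le> ereal (R + R)"
    by (rule Vp_norm_le[OF pos])
  then show ?thesis by simp
qed

lemma less_infinity_iff_le_ereal: "x < \<infinity> \<longleftrightarrow> (\<exists>R. x \<le> ereal R)"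
  by (cases x) auto

theorem proposition3p4:
  fixes p a :: real and \<nu> :: "nat \<Rightarrow> real" and f :: "real \<Rightarrow> real"
  assumes "1 \<le> p"
    and "modulus_of_variation \<nu>"
    and "filterlim \<nu> at_top sequentially"
    and "\<forall>k\<ge>1. \<nu> (Suc k) / real (Suc k) powr (1 / p) \<le> \<nu> k / real k powr (1 / p)"
    and "(\<lambda>k. \<nu> k / real k powr (1 / p)) \<longlonglongrightarrow> 0"
    and "continuous_on UNIV f"
    and "\<forall>x. f (x + 2 * pi) = f x"
  shows "f \<in> Vp a p \<nu> \<longleftrightarrow> (SUP n. Vp_norm a p \<nu> (fejer_mean f n)) < \<infinity>"
proof -
  note p = assms(1) and dec = assms(4) and f = assms(6) and per = assms(7)
  have pos: "\<forall>n\<ge>1. 0 < \<nu> n" using assms(2) by (simp add: modulus_of_variation_def)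
  have "0 < p" using p by simp
  have "f \<in> Vp a p \<nu> \<longleftrightarrow> (\<exists>R. Vp_norm a p \<nu> f \<le> ereal R)"
    unfolding Vp_def less_infinity_iff_le_ereal by simp
  also have "\<dots> \<longleftrightarrow> (\<exists>R. \<forall>n. Vp_norm a p \<nu> (fejer_mean f n) \<le> ereal R)"
  proof
    assume "\<exists>R. Vp_norm a p \<nu> f \<le> ereal R"
    then show "\<exists>R. \<forall>n. Vp_norm a p \<nu> (fejer_mean f n) \<le> ereal R"
      using Vp_norm_fejer_mean_le[OF p f per pos dec] by blast
  next
    assume "\<exists>R. \<forall>n. Vp_norm a p \<nu> (fejer_mean f n) \<le> ereal R"
    then show "\<exists>R. Vp_norm a p \<nu> f \<le> ereal R"
      using Vp_norm_le_of_pointwise_limit[where G = "fejer_mean f" and g = f,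
          OF \<open>0 < p\<close> pos fejer_mean_tendsto[OF f]] by blast
  qed
  also have "\<dots> \<longleftrightarrow> (SUP n. Vp_norm a p \<nu> (fejer_mean f n)) < \<infinity>"
    unfolding less_infinity_iff_le_ereal by (simp add: SUP_le_iff)
  finally show ?thesis .
qed

end
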